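(* Let $\mathbb{R}^n$ and $\mathbb{R}^m$ be equipped with arbitrary norms $\|\cdot\|$, with dual norms $\|\cdot\|_*$. Let $P:\mathbb{R}^n\to\mathbb{R}^m$ be differentiable on all of $\mathbb{R}^n$ with $\|P'(x^a)-P'(x^b)\|\le L\|x^a-x^b\|$ for all $x^a,x^b\in\mathbb{R}^n$ (some $L>0$), and suppose there is $\mu>0$ with $\|P'(x)^T h\|_*\ge\mu\|h\|_*$ for all $x\in\mathbb{R}^n$, $h\in\mathbb{R}^m$. Then for any $x^0\in\mathbb{R}^n$ the sequence generated by Algorithm 1 converges to a solution of $P(x)=0$.
   Context: For a vector $c$, the dual norm is $\|c\|_*=\sup_{\|x\|=1}(c,x)$; the norm of $P'(x)$ is the operator norm subordinate to the chosen vector norms. Algorithm 1 (Basic Newton method): starting from $x^0$, for $k\ge0$ let $z^k$ be any solution of $\min\{\|z\|: P'(x^k)z=P(x^k)\}$ and set $x^{k+1}=x^k-\min\{1,\frac{\mu^2}{L\|P(x^k)\|}\}z^k$ (with step $1$ and $z^k=0$ if $P(x^k)=0$). *)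

theory Defs
  imports "HOL-Analysis.Analysis"
begin

definition is_norm :: "('a::real_vector \<Rightarrow> real) \<Rightarrow> bool" where
  "is_norm N \<longleftrightarrow>
     (\<forall>x. N x = 0 \<longleftrightarrow> x = 0) \<and>
     (\<forall>c x. N (c *\<^sub>R x) = \<bar>c\<bar> * N x) \<and>
     (\<forall>x y. N (x + y) \<le> N x + N y)"

definition dual_norm :: "(real^'n \<Rightarrow> real) \<Rightarrow> real^'n \<Rightarrow> real" where
  "dual_norm N c = Sup {c \<bullet> x | x. N x = 1}"

definition op_norm :: "(real^'n \<Rightarrow> real) \<Rightarrow> (real^'m \<Rightarrow> real) \<Rightarrow> real^'n^'m \<Rightarrow> real" where
  "op_norm Nx Ny A = Sup {Ny (A *v x) | x. Nx x = 1}"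

end

theory Submission
  imports Defs
begin

text \<open>
  The minimal-norm correction \<open>z\<^sup>k\<close> satisfies \<open>\<parallel>z\<^sup>k\<parallel> \<le> \<parallel>P(x\<^sup>k)\<parallel>/\<mu>\<close>: by duality (separating
  hyperplanes) the regularity bound on \<open>P'(x)\<^sup>T\<close> says that \<open>P'(x)\<close> maps the ball of radius
  \<open>1/\<mu>\<close> onto a set containing the unit ball. Together with the Lipschitz estimate
  \<open>\<parallel>P(x - t z) - P(x) + t P'(x) z\<parallel> \<le> L t\<^sup>2 \<parallel>z\<parallel>\<^sup>2 / 2\<close> this makes the residual
  \<open>\<parallel>P(x\<^sup>k)\<parallel>\<close> drop by the fixed amount \<open>\<mu>\<^sup>2/(2L)\<close> while it is at least \<open>\<mu>\<^sup>2/L\<close>, and halve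
  afterwards. Hence the residuals are summable, and since the steps are bounded by
  residual\<open>/\<mu>\<close>, the iterates form a Cauchy sequence whose limit is a zero of \<open>P\<close>.
\<close>

lemma is_norm_zero: "is_norm N \<Longrightarrow> N 0 = 0"
  by (simp add: is_norm_def)

lemma is_norm_scaleR: "is_norm N \<Longrightarrow> N (c *\<^sub>R x) = \<bar>c\<bar> * N x"
  by (simp add: is_norm_def)

lemma is_norm_triangle: "is_norm N \<Longrightarrow> N (x + y) \<le> N x + N y"
  by (simp add: is_norm_def)

lemma is_norm_eq_0_iff: "is_norm N \<Longrightarrow> N x = 0 \<longleftrightarrow> x = 0"
  by (simp add: is_norm_def)

lemma is_norm_minus: "is_norm N \<Longrightarrow> N (- x) = N x"
  using is_norm_scaleR[of N "-1" x] by simp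

lemma is_norm_nonneg:
  assumes n: "is_norm N" shows "N x \<ge> 0"
proof -
  have "N (x + - x) \<le> N x + N (- x)" by (rule is_norm_triangle[OF n])
  thus ?thesis using is_norm_minus[OF n] is_norm_zero[OF n] by simp
qed

lemma is_norm_pos: "is_norm N \<Longrightarrow> x \<noteq> 0 \<Longrightarrow> N x > 0"
  using is_norm_eq_0_iff is_norm_nonneg by (metis less_eq_real_def)

lemma is_norm_normalize: "is_norm N \<Longrightarrow> x \<noteq> 0 \<Longrightarrow> N ((1 / N x) *\<^sub>R x) = 1"
  using is_norm_pos[of N x] by (simp add: is_norm_scaleR)

lemma is_norm_abs_diff_le:
  assumes n: "is_norm N" shows "\<bar>N x - N y\<bar> \<le> N (x - y)"
proof -
  have "N x \<le> N (x - y) + N y" using is_norm_triangle[OF n, of "x - y" y] by simp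
  moreover have "N y \<le> N (y - x) + N x" using is_norm_triangle[OF n, of "y - x" x] by simp
  moreover have "N (y - x) = N (x - y)" using is_norm_minus[OF n, of "x - y"] by simp
  ultimately show ?thesis by linarith
qed

lemma is_norm_sum_le: "is_norm N \<Longrightarrow> N (sum f A) \<le> (\<Sum>i\<in>A. N (f i))"
proof (induction A rule: infinite_finite_induct)
  case (insert a A)
  thus ?case using is_norm_triangle[of N "f a" "sum f A"] by simp
qed (auto simp: is_norm_zero)

subsection \<open>Equivalence with the Euclidean norm\<close>

lemma is_norm_le_mult_norm:
  fixes N :: "'a::euclidean_space \<Rightarrow> real"
  assumes n: "is_norm N"
  shows "\<exists>C>0. \<forall>x. N x \<le> C * norm x"
proof -
  define C where "C = 1 + (\<Sum>b\<in>Basis. N b)"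
  have "C > 0"
    unfolding C_def using is_norm_nonneg[OF n] by (simp add: add_pos_nonneg sum_nonneg)
  moreover have "N x \<le> C * norm x" for x
  proof -
    have "N x = N (\<Sum>b\<in>Basis. (x \<bullet> b) *\<^sub>R b)" by (simp add: euclidean_representation)
    also have "\<dots> \<le> (\<Sum>b\<in>Basis. N ((x \<bullet> b) *\<^sub>R b))" by (rule is_norm_sum_le[OF n])
    also have "\<dots> = (\<Sum>b\<in>Basis. \<bar>x \<bullet> b\<bar> * N b)" by (simp add: is_norm_scaleR[OF n])
    also have "\<dots> \<le> (\<Sum>b\<in>Basis. norm x * N b)"
      by (intro sum_mono mult_right_mono) (auto simp: Basis_le_norm is_norm_nonneg[OF n])
    also have "\<dots> \<le> C * norm x"
      unfolding C_def by (simp add: sum_distrib_left algebra_simps mult.commute)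
    finally show ?thesis .
  qed
  ultimately show ?thesis by blast
qed

lemma is_norm_continuous_on:
  fixes N :: "'a::euclidean_space \<Rightarrow> real"
  assumes n: "is_norm N"
  shows "continuous_on S N"
proof -
  obtain C where C: "C > 0" "\<And>x. N x \<le> C * norm x" using is_norm_le_mult_norm[OF n] by blast
  have "\<bar>N x - N y\<bar> \<le> C * dist x y" for x y
    using is_norm_abs_diff_le[OF n, of x y] C(2)[of "x - y"] by (simp add: dist_norm)
  hence "C-lipschitz_on S N"
    by (intro lipschitz_onI) (use C(1) in \<open>auto simp: dist_real_def\<close>)
  thus ?thesis by (rule lipschitz_on_continuous_on)
qed

lemma is_norm_ge_mult_norm:
  fixes N :: "'a::euclidean_space \<Rightarrow> real"
  assumes n: "is_norm N"
  shows "\<exists>c>0. \<forall>x. c * norm x \<le> N x"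
proof -
  obtain b :: 'a where b: "b \<in> Basis" using nonempty_Basis by blast
  have "sphere (0::'a) 1 \<noteq> {}" using b by (auto intro!: exI[of _ b])
  then obtain y where y: "y \<in> sphere 0 1" "\<And>w. w \<in> sphere 0 1 \<Longrightarrow> N y \<le> N w"
    using continuous_attains_inf[OF compact_sphere _ is_norm_continuous_on[OF n]] by blast
  have "N y * norm x \<le> N x" for x
  proof (cases "x = 0")
    case False
    have "N y \<le> N ((1 / norm x) *\<^sub>R x)" using False by (intro y(2)) simp
    also have "\<dots> = N x / norm x" by (simp add: is_norm_scaleR[OF n])
    finally show ?thesis using False by (simp add: field_simps)
  qed (simp add: is_norm_zero[OF n])
  moreover have "y \<noteq> 0" using y(1) by auto
  hence "N y > 0" by (rule is_norm_pos[OF n])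
  ultimately show ?thesis by blast
qed

lemma convex_is_norm_sublevel:
  assumes n: "is_norm N" shows "convex {w. N w \<le> r}"
  unfolding convex_def
proof (intro allI impI ballI, simp)
  fix x y and u v :: real
  assume a: "N x \<le> r" "N y \<le> r" "0 \<le> u" "0 \<le> v" "u + v = 1"
  have "N (u *\<^sub>R x + v *\<^sub>R y) \<le> u * N x + v * N y"
    using is_norm_triangle[OF n, of "u *\<^sub>R x" "v *\<^sub>R y"] a by (simp add: is_norm_scaleR[OF n])
  also have "\<dots> \<le> u * r + v * r" using a by (intro add_mono mult_left_mono) auto
  also have "\<dots> = r" using a(5) by (metis distrib_left mult.commute mult_1)
  finally show "N (u *\<^sub>R x + v *\<^sub>R y) \<le> r" .
qed

lemma compact_is_norm_sublevel:
  fixes N :: "'a::euclidean_space \<Rightarrow> real"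
  assumes n: "is_norm N" shows "compact {w. N w \<le> r}"
proof -
  obtain k where k: "k > 0" "\<And>x. k * norm x \<le> N x" using is_norm_ge_mult_norm[OF n] by blast
  have "closed {w. N w \<le> r}"
    by (rule closed_Collect_le[OF is_norm_continuous_on[OF n] continuous_on_const])
  moreover have "bounded {w. N w \<le> r}"
    unfolding bounded_iff
  proof (rule exI[of _ "r / k"], clarify)
    fix x assume "N x \<le> r"
    hence "k * norm x \<le> r" using k(2)[of x] by linarith
    thus "norm x \<le> r / k" using k(1) by (simp add: field_simps)
  qed
  ultimately show ?thesis by (simp add: compact_eq_bounded_closed)
qed

lemma tendsto_zero_if_is_norm_tendsto_zero:
  fixes f :: "nat \<Rightarrow> 'a::euclidean_space"
  assumes n: "is_norm N" and lim: "(\<lambda>k. N (f k)) \<longlonglongrightarrow> 0"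
  shows "f \<longlonglongrightarrow> 0"
proof -
  obtain c where c: "c > 0" "\<And>v. c * norm v \<le> N v" using is_norm_ge_mult_norm[OF n] by blast
  have "norm (f k) \<le> N (f k) / c" for k
    using c(2)[of "f k"] c(1) by (simp add: pos_le_divide_eq mult.commute)
  hence "\<forall>\<^sub>F k in sequentially. norm (f k) \<le> N (f k) / c" by (simp add: always_eventually)
  moreover have "(\<lambda>k. N (f k) / c) \<longlonglongrightarrow> 0" using tendsto_divide_zero[OF lim] by simp
  ultimately show ?thesis by (rule Lim_null_comparison)
qed

subsection \<open>Dual and operator norms\<close>

lemma bdd_above_dual_norm_set:
  fixes N :: "real^'n \<Rightarrow> real"
  assumes n: "is_norm N" shows "bdd_above {c \<bullet> x | x. N x = 1}"
proof -
  obtain k where k: "k > 0" "\<And>x. k * norm x \<le> N x" using is_norm_ge_mult_norm[OF n] by blast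
  have "c \<bullet> x \<le> norm c / k" if "N x = 1" for x
  proof -
    have "norm x \<le> 1 / k" using k(2)[of x] that k(1) by (simp add: field_simps)
    hence "norm c * norm x \<le> norm c / k" by (simp add: mult_left_mono divide_inverse)
    thus ?thesis using norm_cauchy_schwarz[of c x] by linarith
  qed
  thus ?thesis by (auto intro!: bdd_aboveI[of _ "norm c / k"])
qed

lemma dual_norm_ge_inner:
  fixes N :: "real^'n \<Rightarrow> real"
  assumes "is_norm N" and "N x = 1" shows "c \<bullet> x \<le> dual_norm N c"
  unfolding dual_norm_def using assms by (intro cSup_upper bdd_above_dual_norm_set) auto

lemma dual_norm_le:
  fixes N :: "real^'n \<Rightarrow> real"
  assumes n: "is_norm N" and "\<And>x. N x = 1 \<Longrightarrow> c \<bullet> x \<le> B" shows "dual_norm N c \<le> B"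
proof -
  obtain b :: "real^'n" where "b \<in> Basis" using nonempty_Basis by blast
  hence "N ((1 / N b) *\<^sub>R b) = 1" by (intro is_norm_normalize[OF n]) auto
  thus ?thesis unfolding dual_norm_def using assms by (intro cSup_least) auto
qed

lemma inner_le_dual_norm_mult:
  fixes N :: "real^'n \<Rightarrow> real"
  assumes n: "is_norm N" shows "c \<bullet> v \<le> dual_norm N c * N v"
proof (cases "v = 0")
  case False
  from dual_norm_ge_inner[OF n is_norm_normalize[OF n False], of c]
  have "(c \<bullet> v) / N v \<le> dual_norm N c" by simp
  thus ?thesis using is_norm_pos[OF n False] by (simp add: field_simps)
qed (simp add: is_norm_zero[OF n])

lemma dual_norm_nonneg:
  fixes N :: "real^'n \<Rightarrow> real"
  assumes n: "is_norm N" shows "0 \<le> dual_norm N c"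
proof -
  obtain b :: "real^'n" where "b \<in> Basis" using nonempty_Basis by blast
  hence "b \<noteq> 0" by auto
  from inner_le_dual_norm_mult[OF n, of c b] inner_le_dual_norm_mult[OF n, of c "- b"]
  have "0 \<le> dual_norm N c * N b" by (simp add: is_norm_minus[OF n])
  thus ?thesis using is_norm_pos[OF n \<open>b \<noteq> 0\<close>] by (simp add: zero_le_mult_iff)
qed

lemma separating_functional_from_origin:
  fixes S :: "'a::euclidean_space set"
  assumes "convex S" "closed S" "0 \<in> S" "p \<notin> S"
  shows "\<exists>c. (\<forall>s\<in>S. c \<bullet> s < 1) \<and> c \<bullet> p > 1"
proof -
  obtain a \<beta> where ab: "a \<bullet> p < \<beta>" "\<And>s. s \<in> S \<Longrightarrow> a \<bullet> s > \<beta>"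
    using separating_hyperplane_closed_point[OF assms(1,2,4)] by auto
  have "\<beta> < 0" using ab(2)[OF \<open>0 \<in> S\<close>] by simp
  hence "(\<forall>s\<in>S. (1 / \<beta>) *\<^sub>R a \<bullet> s < 1) \<and> (1 / \<beta>) *\<^sub>R a \<bullet> p > 1"
    using ab by (auto simp: field_simps)
  thus ?thesis by blast
qed

lemma is_norm_le_if_dual_bound:
  fixes N :: "real^'n \<Rightarrow> real"
  assumes n: "is_norm N" and bound: "\<And>h. dual_norm N h \<le> 1 \<Longrightarrow> h \<bullet> v \<le> B"
  shows "N v \<le> B"
proof (rule ccontr)
  assume "\<not> N v \<le> B"
  moreover have "0 \<le> B" using bound[of 0] dual_norm_le[OF n, of 0 1] by simp
  ultimately obtain r where r: "B < r" "r < N v" "r > 0" by (meson dense less_le_trans not_le)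
  have "(1 / r) *\<^sub>R v \<notin> {w. N w \<le> 1}" using r by (simp add: is_norm_scaleR[OF n] field_simps)
  moreover have "0 \<in> {w. N w \<le> 1}" by (simp add: is_norm_zero[OF n])
  ultimately obtain c where c: "\<forall>w\<in>{w. N w \<le> 1}. c \<bullet> w < 1" "c \<bullet> ((1 / r) *\<^sub>R v) > 1"
    using separating_functional_from_origin[OF convex_is_norm_sublevel[OF n]
        compact_imp_closed[OF compact_is_norm_sublevel[OF n]]] by blast
  have "dual_norm N c \<le> 1" using c(1) by (intro dual_norm_le[OF n]) (simp add: less_imp_le)
  hence "c \<bullet> v \<le> B" by (rule bound)
  moreover have "c \<bullet> v > r" using c(2) r by (simp add: field_simps)
  ultimately show False using r by simp
qed

lemma op_norm_mult_le:
  fixes Nx :: "real^'n \<Rightarrow> real" and Ny :: "real^'m \<Rightarrow> real"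
  assumes nx: "is_norm Nx" and ny: "is_norm Ny"
  shows "Ny (A *v w) \<le> op_norm Nx Ny A * Nx w"
proof (cases "w = 0")
  case False
  obtain C where C: "C > 0" "\<And>x. Ny x \<le> C * norm x" using is_norm_le_mult_norm[OF ny] by blast
  obtain k where k: "k > 0" "\<And>x. k * norm x \<le> Nx x" using is_norm_ge_mult_norm[OF nx] by blast
  obtain K where K: "\<And>x. norm (A *v x) \<le> norm x * K" "K > 0"
    using bounded_linear.pos_bounded[OF matrix_vector_mul_bounded_linear[of A]] by blast
  have bdd: "bdd_above {Ny (A *v x) | x. Nx x = 1}"
  proof (rule bdd_aboveI[of _ "C * (K / k)"], clarify)
    fix x assume x: "Nx x = 1"
    have "norm x \<le> 1 / k" using k(2)[of x] x k(1) by (simp add: field_simps)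
    have "Ny (A *v x) \<le> C * (norm x * K)" using C K(1)[of x] by (meson mult_left_mono order_trans less_imp_le)
    also have "\<dots> \<le> C * ((1 / k) * K)"
      using C(1) K(2) \<open>norm x \<le> 1 / k\<close> by (intro mult_left_mono mult_right_mono) auto
    finally show "Ny (A *v x) \<le> C * (K / k)" by simp
  qed
  have "Ny (A *v ((1 / Nx w) *\<^sub>R w)) \<le> op_norm Nx Ny A"
    unfolding op_norm_def using is_norm_normalize[OF nx False] by (intro cSup_upper[OF _ bdd]) blast
  hence "Ny (A *v w) / Nx w \<le> op_norm Nx Ny A"
    using is_norm_pos[OF nx False] by (simp add: matrix_vector_mult_scaleR is_norm_scaleR[OF ny])
  thus ?thesis using is_norm_pos[OF nx False] by (simp add: field_simps)
qed (simp add: is_norm_zero[OF nx] is_norm_zero[OF ny])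

subsection \<open>Solvability with norm control\<close>

lemma exists_solution_norm_le:
  fixes A :: "real^'n^'m" and nx :: "real^'n \<Rightarrow> real" and ny :: "real^'m \<Rightarrow> real"
  assumes nx: "is_norm nx" and ny: "is_norm ny" and mu: "\<mu> > 0"
    and reg: "\<And>h. dual_norm nx (transpose A *v h) \<ge> \<mu> * dual_norm ny h"
  shows "\<exists>w. A *v w = b \<and> nx w \<le> ny b / \<mu>"
proof (cases "b = 0")
  case True thus ?thesis by (intro exI[of _ 0]) (simp add: is_norm_zero[OF nx] is_norm_zero[OF ny])
next
  case False
  define b' where "b' = (1 / ny b) *\<^sub>R b"
  define S where "S = (\<lambda>w. A *v w) ` {w. nx w \<le> 1 / \<mu>}"
  have "b' \<in> S"
  proof (rule ccontr)
    assume "b' \<notin> S"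
    moreover have "compact S" unfolding S_def
      by (intro compact_continuous_image compact_is_norm_sublevel[OF nx] linear_continuous_on
          matrix_vector_mul_bounded_linear)
    moreover have "convex S" unfolding S_def
      by (intro convex_linear_image convex_is_norm_sublevel[OF nx] matrix_vector_mul_linear)
    moreover have "0 \<in> S" unfolding S_def using mu
      by (auto simp: is_norm_zero[OF nx] intro!: image_eqI[of _ _ 0])
    ultimately obtain c where c: "\<And>s. s \<in> S \<Longrightarrow> c \<bullet> s < 1" "c \<bullet> b' > 1"
      using separating_functional_from_origin[of S b'] compact_imp_closed by blast
    have "dual_norm nx (transpose A *v c) \<le> \<mu>"
    proof (rule dual_norm_le[OF nx])
      fix w assume "nx w = 1"
      hence "A *v ((1 / \<mu>) *\<^sub>R w) \<in> S"
        unfolding S_def using mu by (intro imageI) (simp add: is_norm_scaleR[OF nx])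
      hence "(1 / \<mu>) * (c \<bullet> (A *v w)) < 1" using c(1) by (force simp: matrix_vector_mult_scaleR)
      thus "(transpose A *v c) \<bullet> w \<le> \<mu>" using mu by (simp add: dot_lmul_matrix field_simps)
    qed
    with reg[of c] have "\<mu> * dual_norm ny c \<le> \<mu> * 1" by simp
    hence "dual_norm ny c \<le> 1" using mu by simp
    hence "c \<bullet> b' \<le> 1"
      using inner_le_dual_norm_mult[OF ny, of c b'] is_norm_normalize[OF ny False]
      by (simp add: b'_def)
    thus False using c(2) by simp
  qed
  then obtain w where w: "nx w \<le> 1 / \<mu>" "A *v w = b'" unfolding S_def by blast
  have p: "ny b > 0" using is_norm_pos[OF ny False] .
  show ?thesis
  proof (intro exI conjI)
    show "A *v (ny b *\<^sub>R w) = b" using w(2) p by (simp add: b'_def matrix_vector_mult_scaleR)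
    have "nx (ny b *\<^sub>R w) = ny b * nx w" using p by (simp add: is_norm_scaleR[OF nx])
    also have "\<dots> \<le> ny b * (1 / \<mu>)" using w(1) p by (intro mult_left_mono) auto
    finally show "nx (ny b *\<^sub>R w) \<le> ny b / \<mu>" by simp
  qed
qed

subsection \<open>One step of the method\<close>

lemma linearization_error_le:
  fixes P :: "real^'n \<Rightarrow> real^'m" and P' :: "real^'n \<Rightarrow> real^'n^'m"
    and nx :: "real^'n \<Rightarrow> real" and ny :: "real^'m \<Rightarrow> real"
  assumes nx: "is_norm nx" and ny: "is_norm ny"
    and deriv: "\<And>a. (P has_derivative (\<lambda>h. P' a *v h)) (at a)"
    and lip: "\<And>a b. op_norm nx ny (P' a - P' b) \<le> L * nx (a - b)"
    and t: "t \<ge> 0"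
  shows "ny (P (x - t *\<^sub>R z) - P x + t *\<^sub>R (P' x *v z)) \<le> L / 2 * t\<^sup>2 * (nx z)\<^sup>2"
proof (rule is_norm_le_if_dual_bound[OF ny])
  fix h assume h: "dual_norm ny h \<le> 1"
  define K where "K = L * (nx z)\<^sup>2"
  define g where "g s = h \<bullet> (P (x - s *\<^sub>R z) - P x + s *\<^sub>R (P' x *v z)) - K / 2 * s\<^sup>2" for s
  define D where "D s = h \<bullet> ((P' x - P' (x - s *\<^sub>R z)) *v z) - K * s" for s
  have "DERIV g s :> D s" for s
  proof -
    have "((\<lambda>s. x - s *\<^sub>R z) has_derivative (\<lambda>d. - (d *\<^sub>R z))) (at s)"
      by (auto intro!: derivative_eq_intros)
    from has_derivative_compose[OF this deriv]
    have "((\<lambda>s. P (x - s *\<^sub>R z)) has_derivative (\<lambda>d. P' (x - s *\<^sub>R z) *v (- (d *\<^sub>R z)))) (at s)" .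
    hence "(g has_derivative (\<lambda>d. h \<bullet> (P' (x - s *\<^sub>R z) *v (- (d *\<^sub>R z)) + d *\<^sub>R (P' x *v z))
        - K / 2 * (2 * s * d))) (at s)"
      unfolding g_def by (auto intro!: derivative_eq_intros)
    thus ?thesis unfolding has_field_derivative_def
      by (rule has_derivative_eq_rhs)
        (auto simp: D_def fun_eq_iff matrix_vector_mult_scaleR matrix_vector_mult_diff_rdistrib
          inner_diff_right linear_neg[OF matrix_vector_mul_linear] algebra_simps)
  qed
  moreover have "D s \<le> 0" if "0 \<le> s" for s
  proof -
    let ?v = "(P' x - P' (x - s *\<^sub>R z)) *v z"
    have "h \<bullet> ?v \<le> dual_norm ny h * ny ?v" by (rule inner_le_dual_norm_mult[OF ny])
    also have "\<dots> \<le> ny ?v" using h is_norm_nonneg[OF ny, of ?v] dual_norm_nonneg[OF ny, of h]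
      by (simp add: mult_left_le_one_le)
    also have "\<dots> \<le> op_norm nx ny (P' x - P' (x - s *\<^sub>R z)) * nx z"
      by (rule op_norm_mult_le[OF nx ny])
    also have "\<dots> \<le> (L * nx (x - (x - s *\<^sub>R z))) * nx z"
      by (intro mult_right_mono lip is_norm_nonneg[OF nx])
    also have "\<dots> = K * s" using that by (simp add: K_def is_norm_scaleR[OF nx] power2_eq_square)
    finally show ?thesis unfolding D_def by simp
  qed
  ultimately have "g t \<le> g 0" using DERIV_nonpos_imp_nonincreasing[OF t] by blast
  thus "h \<bullet> (P (x - t *\<^sub>R z) - P x + t *\<^sub>R (P' x *v z)) \<le> L / 2 * t\<^sup>2 * (nx z)\<^sup>2"
    unfolding g_def K_def by (simp add: algebra_simps)
qed

lemma newton_step_residual: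
  fixes P :: "real^'n \<Rightarrow> real^'m" and P' :: "real^'n \<Rightarrow> real^'n^'m"
    and nx :: "real^'n \<Rightarrow> real" and ny :: "real^'m \<Rightarrow> real"
  assumes nx: "is_norm nx" and ny: "is_norm ny"
    and deriv: "\<And>a. (P has_derivative (\<lambda>h. P' a *v h)) (at a)"
    and lip: "\<And>a b. op_norm nx ny (P' a - P' b) \<le> L * nx (a - b)"
    and L: "L > 0" and mu: "\<mu> > 0"
    and feas: "P' y *v z = P y" and z_le: "nx z \<le> ny (P y) / \<mu>"
    and t: "t = (if P y = 0 then 1 else min 1 (\<mu>\<^sup>2 / (L * ny (P y))))"
  shows "ny (P y) \<ge> \<mu>\<^sup>2 / L \<Longrightarrow> ny (P (y - t *\<^sub>R z)) \<le> ny (P y) - \<mu>\<^sup>2 / (2 * L)"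
    and "ny (P y) < \<mu>\<^sup>2 / L \<Longrightarrow> ny (P (y - t *\<^sub>R z)) \<le> ny (P y) / 2"
    and "nx (y - t *\<^sub>R z - y) \<le> ny (P y) / \<mu>"
proof -
  define p where "p = ny (P y)"
  have p0: "p \<ge> 0" unfolding p_def by (rule is_norm_nonneg[OF ny])
  have t01: "0 \<le> t" "t \<le> 1" unfolding t using mu L p0 by (auto simp: p_def)
  have nz0: "nx z \<ge> 0" by (rule is_norm_nonneg[OF nx])
  have residual_le: "ny (P (y - t *\<^sub>R z)) \<le> L / 2 * t\<^sup>2 * (p / \<mu>)\<^sup>2 + (1 - t) * p"
  proof -
    have "P (y - t *\<^sub>R z) = (P (y - t *\<^sub>R z) - P y + t *\<^sub>R (P' y *v z)) + (1 - t) *\<^sub>R P y"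
      using feas by (simp add: algebra_simps)
    hence "ny (P (y - t *\<^sub>R z))
        \<le> ny (P (y - t *\<^sub>R z) - P y + t *\<^sub>R (P' y *v z)) + ny ((1 - t) *\<^sub>R P y)"
      using is_norm_triangle[OF ny] by metis
    also have "ny ((1 - t) *\<^sub>R P y) = (1 - t) * p" using t01 by (simp add: is_norm_scaleR[OF ny] p_def)
    also have "ny (P (y - t *\<^sub>R z) - P y + t *\<^sub>R (P' y *v z)) \<le> L / 2 * t\<^sup>2 * (nx z)\<^sup>2"
      by (rule linearization_error_le[OF nx ny deriv lip t01(1)])
    also have "\<dots> \<le> L / 2 * t\<^sup>2 * (p / \<mu>)\<^sup>2"
      using L nz0 z_le by (intro mult_left_mono power_mono) (auto simp: p_def)
    finally show ?thesis by simp
  qed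
  show "ny (P (y - t *\<^sub>R z)) \<le> ny (P y) - \<mu>\<^sup>2 / (2 * L)" if "ny (P y) \<ge> \<mu>\<^sup>2 / L"
  proof -
    have "p > 0" using that mu L unfolding p_def by (smt (verit) divide_pos_pos zero_less_power)
    hence "P y \<noteq> 0" using is_norm_zero[OF ny] unfolding p_def by auto
    moreover have "\<mu>\<^sup>2 / (L * p) \<le> 1" using that \<open>p > 0\<close> L by (simp add: p_def field_simps)
    ultimately have t_eq: "t = \<mu>\<^sup>2 / (L * p)" unfolding t p_def by simp
    have "L / 2 * t\<^sup>2 * (p / \<mu>)\<^sup>2 = \<mu>\<^sup>2 / (2 * L)" and "(1 - t) * p = p - \<mu>\<^sup>2 / L"
      using \<open>p > 0\<close> L mu by (simp_all add: t_eq field_simps power2_eq_square)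
    thus ?thesis using residual_le unfolding p_def by simp
  qed
  show "ny (P (y - t *\<^sub>R z)) \<le> ny (P y) / 2" if "ny (P y) < \<mu>\<^sup>2 / L"
  proof (cases "p = 0")
    case True
    hence "z = 0" using z_le nz0 is_norm_eq_0_iff[OF nx] by (simp add: p_def)
    thus ?thesis using True by (simp add: p_def)
  next
    case False
    hence "p > 0" using p0 by simp
    hence "t = 1" using that L unfolding t p_def by (auto simp: field_simps)
    have "L / 2 * t\<^sup>2 * (p / \<mu>)\<^sup>2 = p * (L * p / \<mu>\<^sup>2) / 2"
      using mu by (simp add: \<open>t = 1\<close> field_simps power2_eq_square)
    also have "\<dots> \<le> p * 1 / 2"
      using that \<open>p > 0\<close> L mu by (intro divide_right_mono mult_left_mono) (auto simp: p_def field_simps)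
    finally show ?thesis using residual_le \<open>t = 1\<close> unfolding p_def by simp
  qed
  have "nx (y - t *\<^sub>R z - y) = t * nx z"
    using t01 is_norm_minus[OF nx, of "t *\<^sub>R z"] by (simp add: is_norm_scaleR[OF nx])
  also have "\<dots> \<le> 1 * (ny (P y) / \<mu>)" using t01 nz0 z_le by (intro mult_mono) auto
  finally show "nx (y - t *\<^sub>R z - y) \<le> ny (P y) / \<mu>" by simp
qed

subsection \<open>Convergence\<close>

lemma summable_if_drop_then_halve:
  fixes p :: "nat \<Rightarrow> real"
  assumes nonneg: "\<And>k. p k \<ge> 0" and \<delta>: "\<delta> > 0"
    and drop: "\<And>k. p k \<ge> r \<Longrightarrow> p (Suc k) \<le> p k - \<delta>"
    and halve: "\<And>k. p k < r \<Longrightarrow> p (Suc k) \<le> p k / 2"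
  shows "summable p"
proof -
  have "\<exists>K. p K < r"
  proof (rule ccontr)
    assume "\<nexists>K. p K < r"
    hence linear_decrease: "p k \<le> p 0 - real k * \<delta>" for k
    proof (induction k)
      case (Suc k)
      thus ?case using drop[of k] \<open>\<nexists>K. p K < r\<close> by (simp add: algebra_simps not_less)
    qed simp
    obtain k :: nat where "real k > p 0 / \<delta>" using reals_Archimedean2 by blast
    hence "real k * \<delta> > p 0" using \<delta> by (simp add: field_simps)
    thus False using linear_decrease[of k] nonneg[of k] by linarith
  qed
  then obtain K where K: "p K < r" by blast
  have geometric: "p (j + K) \<le> p K * (1/2) ^ j" for j
  proof (induction j)
    case (Suc j)
    have "p K * (1/2) ^ j \<le> p K" using nonneg[of K] by (simp add: mult_left_le power_le_one)
    hence "p (Suc (j + K)) \<le> p (j + K) / 2" using Suc K by (intro halve) linarith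
    thus ?case using Suc by simp
  qed simp
  have "summable (\<lambda>j. p K * (1/2::real) ^ j)" by (intro summable_mult summable_geometric) simp
  hence "summable (\<lambda>j. p (j + K))"
    by (rule summable_comparison_test'[where N=0]) (use geometric nonneg in simp)
  thus ?thesis by simp
qed

lemma convergent_if_summable_norm_diff:
  fixes x :: "nat \<Rightarrow> 'a::banach"
  assumes "summable (\<lambda>k. norm (x (Suc k) - x k))"
  shows "convergent x"
proof -
  obtain s where "(\<lambda>k. x (Suc k) - x k) sums s"
    using summable_norm_cancel[OF assms] unfolding summable_def by blast
  hence "(\<lambda>n. x n - x 0) \<longlonglongrightarrow> s" by (simp add: sums_def sum_lessThan_telescope)
  hence "(\<lambda>n. (x n - x 0) + x 0) \<longlonglongrightarrow> s + x 0" by (intro tendsto_add tendsto_const)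
  thus ?thesis unfolding convergent_def by auto
qed

theorem corollary4:
  fixes P :: "real^'n \<Rightarrow> real^'m"
    and P' :: "real^'n \<Rightarrow> real^'n^'m"
    and nx :: "real^'n \<Rightarrow> real"
    and ny :: "real^'m \<Rightarrow> real"
    and L \<mu> :: real
    and x :: "nat \<Rightarrow> real^'n"
    and z :: "nat \<Rightarrow> real^'n"
    and x0 :: "real^'n"
  assumes nx: "is_norm nx" and ny: "is_norm ny"
    and deriv: "\<And>a. (P has_derivative (\<lambda>h. P' a *v h)) (at a)"
    and L_pos: "L > 0"
    and lip: "\<And>a b. op_norm nx ny (P' a - P' b) \<le> L * nx (a - b)"
    and mu_pos: "\<mu> > 0"
    and reg: "\<And>a h. dual_norm nx (transpose (P' a) *v h) \<ge> \<mu> * dual_norm ny h"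
    and init: "x 0 = x0"
    and z_feas: "\<And>k. P' (x k) *v z k = P (x k)"
    and z_min: "\<And>k w. P' (x k) *v w = P (x k) \<Longrightarrow> nx (z k) \<le> nx w"
    and z_zero: "\<And>k. P (x k) = 0 \<Longrightarrow> z k = 0"
    and step: "\<And>k. x (Suc k) = x k - (if P (x k) = 0 then 1
                     else min 1 (\<mu>\<^sup>2 / (L * ny (P (x k))))) *\<^sub>R z k"
  shows "\<exists>xs. x \<longlonglongrightarrow> xs \<and> P xs = 0"
proof -
  define p where "p k = ny (P (x k))" for k
  have z_le: "nx (z k) \<le> p k / \<mu>" for k
    using exists_solution_norm_le[OF nx ny mu_pos reg, of "x k" "P (x k)"] z_min
    unfolding p_def by (meson order_trans)
  note newton_step = newton_step_residual[OF nx ny deriv lip L_pos mu_pos z_feas z_le[unfolded p_def] refl,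
      folded step p_def]
  have "summable p"
    using L_pos mu_pos newton_step(1,2) is_norm_nonneg[OF ny]
    by (intro summable_if_drop_then_halve[of p "\<mu>\<^sup>2 / (2 * L)" "\<mu>\<^sup>2 / L"]) (auto simp: p_def)
  obtain c where c: "c > 0" "\<And>v. c * norm v \<le> nx v" using is_norm_ge_mult_norm[OF nx] by blast
  have "norm (x (Suc k) - x k) \<le> p k / (\<mu> * c)" for k
    using order_trans[OF c(2) newton_step(3)] c(1) mu_pos by (simp add: field_simps)
  hence "summable (\<lambda>k. norm (x (Suc k) - x k))"
    by (intro summable_comparison_test'[OF summable_divide[OF \<open>summable p\<close>], of 0]) simp
  then obtain xs where xs: "x \<longlonglongrightarrow> xs"
    using convergent_if_summable_norm_diff convergent_def by blast
  have "(\<lambda>k. ny (P (x k))) \<longlonglongrightarrow> 0"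
    using summable_LIMSEQ_zero[OF \<open>summable p\<close>] unfolding p_def .
  hence "(\<lambda>k. P (x k)) \<longlonglongrightarrow> 0" by (rule tendsto_zero_if_is_norm_tendsto_zero[OF ny])
  moreover have "(\<lambda>k. P (x k)) \<longlonglongrightarrow> P xs"
    using isCont_tendsto_compose[OF has_derivative_continuous[OF deriv] xs] .
  ultimately show ?thesis using xs LIMSEQ_unique by blast
qed

end
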